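(* Let $f\in\mathscr C_J\setminus\mathscr C_I$, let $M=\{1,\dots,m\}$, and let $q$ be a hereditarily thrifty partial function from $X^M$ to $X$ which belongs to $\mathscr C_J$. Then $q$ can be written as a term over $f$ and finitely many partial functions belonging to $\mathscr C_I$, i.e. $q$ equals a partial function obtained by composing $f$ and finitely many partial functions in $\mathscr C_I$ (composition of partial functions being defined exactly where all inner values are defined and lie in the domain of the outer function).
   Context: $X=\omega\times\omega$, elements $(a|b)$ ($x$-coordinate $a$, $y$-coordinate $b$). Width of $Y\subseteq X$: $\sup_n|Y\cap(\omega\times\{n\})|$; $I$ = ideal of subsets of $X$ of finite width; $J$ = ideal of subsets of $X$ meeting each line $\omega\times\{n\}$ in a finite set. For an ideal $K$, $\mathscr C_K$ is the set of finitary operations $g:X^k\to X$ with $g[A^k]\in K$ for all $A\in K$; a partial function from $X^M$ to $X$ is in $\mathscr C_K$ iff it has a total extension in $\mathscr C_K$. For a finite index set $N$, $B^N_k=\{u\in X^N:\exists i\in N\,((u_i)^y<k)\}$; a subset of $X^N$ is bounded iff contained in some $B^N_k$; a partial $p$ from $X^N$ to $Y$ is thrifty iff $p^{-1}[d]$ is bounded for all $d\in Y$. For $S\subseteq M$, $T=M\setminus S$, $c\in X^S$: $p_{\cup c}$ is the partial function on $X^T$ with $p_{\cup c}(z)=p(z\cup c)$. $p$ is hereditarily thrifty iff $p_{\cup c}$ is thrifty for every proper subset $S\subsetneq M$ and every $c\in X^S$. *)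

theory Defs
  imports "HOL-Library.FuncSet"
begin

type_synonym pt = "nat \<times> nat"   (* (a|b): fst = x-coordinate a, snd = y-coordinate b *)

definition line :: "nat \<Rightarrow> pt set" where
  "line n = {u. snd u = n}"

definition idealI :: "pt set set" where
  "idealI = {Y. \<exists>w::nat. \<forall>n. finite (Y \<inter> line n) \<and> card (Y \<inter> line n) \<le> w}"

definition idealJ :: "pt set set" where
  "idealJ = {Y. \<forall>n. finite (Y \<inter> line n)}"

(* total operation g on X^N (tuples = extensional functions on N) lies in C_K *)
definition in_clone :: "pt set set \<Rightarrow> nat set \<Rightarrow> ((nat \<Rightarrow> pt) \<Rightarrow> pt) \<Rightarrow> bool" where
  "in_clone K N g \<longleftrightarrow> (\<forall>A\<in>K. g ` (PiE N (\<lambda>_. A)) \<in> K)"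

definition partial_in_clone :: "pt set set \<Rightarrow> nat set \<Rightarrow> ((nat \<Rightarrow> pt) \<Rightarrow> pt option) \<Rightarrow> bool" where
  "partial_in_clone K N p \<longleftrightarrow>
     (\<exists>g. in_clone K N g \<and> (\<forall>u\<in>PiE N (\<lambda>_. UNIV). \<forall>d. p u = Some d \<longrightarrow> g u = d))"

definition Bset :: "nat set \<Rightarrow> nat \<Rightarrow> (nat \<Rightarrow> pt) set" where
  "Bset N k = {u \<in> PiE N (\<lambda>_. UNIV). \<exists>i\<in>N. snd (u i) < k}"

definition bounded_set :: "nat set \<Rightarrow> (nat \<Rightarrow> pt) set \<Rightarrow> bool" where
  "bounded_set N S \<longleftrightarrow> (\<exists>k. S \<subseteq> Bset N k)"

definition thrifty :: "nat set \<Rightarrow> ((nat \<Rightarrow> pt) \<Rightarrow> 'y option) \<Rightarrow> bool" where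
  "thrifty N p \<longleftrightarrow> (\<forall>d. bounded_set N {u \<in> PiE N (\<lambda>_. UNIV). p u = Some d})"

(* p_{\<union>c}: the partial function z \<mapsto> p (z \<union> c) on X^(M - S) *)
definition restr_fun :: "nat set \<Rightarrow> nat set \<Rightarrow> (nat \<Rightarrow> pt) \<Rightarrow> ((nat \<Rightarrow> pt) \<Rightarrow> 'y option) \<Rightarrow> (nat \<Rightarrow> pt) \<Rightarrow> 'y option" where
  "restr_fun M S c p = (\<lambda>z. if z \<in> PiE (M - S) (\<lambda>_. UNIV)
       then p (\<lambda>i. if i \<in> S then c i else z i) else None)"

definition hereditarily_thrifty :: "nat set \<Rightarrow> ((nat \<Rightarrow> pt) \<Rightarrow> 'y option) \<Rightarrow> bool" where
  "hereditarily_thrifty M p \<longleftrightarrow>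
     (\<forall>S. S \<subset> M \<longrightarrow> (\<forall>c\<in>PiE S (\<lambda>_. UNIV). thrifty (M - S) (restr_fun M S c p)))"

(* terms over f (symbol Fn) and partial functions carried at the nodes (symbol Pn);
   an operation node with argument list ts has arity index set {..<length ts} *)
datatype tm = V nat | Fn "tm list" | Pn "(nat \<Rightarrow> pt) \<Rightarrow> pt option" "tm list"

definition tup :: "pt list \<Rightarrow> nat \<Rightarrow> pt" where
  "tup xs = restrict (nth xs) {..<length xs}"

fun eval :: "((nat \<Rightarrow> pt) \<Rightarrow> pt) \<Rightarrow> tm \<Rightarrow> (nat \<Rightarrow> pt) \<Rightarrow> pt option" where
  "eval f (V i) z = Some (z i)"
| "eval f (Fn ts) z = (case those (map (\<lambda>t. eval f t z) ts) of None \<Rightarrow> None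
                         | Some xs \<Rightarrow> Some (f (tup xs)))"
| "eval f (Pn p ts) z = (case those (map (\<lambda>t. eval f t z) ts) of None \<Rightarrow> None
                         | Some xs \<Rightarrow> p (tup xs))"

fun wf_tm :: "nat \<Rightarrow> nat set \<Rightarrow> tm \<Rightarrow> bool" where
  "wf_tm k M (V i) = (i \<in> M)"
| "wf_tm k M (Fn ts) = (length ts = k \<and> (\<forall>t\<in>set ts. wf_tm k M t))"
| "wf_tm k M (Pn p ts) = (partial_in_clone idealI {..<length ts} p \<and> (\<forall>t\<in>set ts. wf_tm k M t))"

end

theory Submission
  imports Defs
begin

text \<open>
  Since \<open>f \<notin> \<C>\<^sub>I\<close>, some \<open>A \<in> I\<close> has an image \<open>R = f[A\<^sup>k]\<close> of infinite width, so
  every finite set can be encoded injectively by points of \<open>R\<close> lying on one line. Enumerate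
  the coordinates of an argument \<open>z\<close> of \<open>q\<close> by increasing height. Hereditary thrift together
  with \<open>q \<in> \<C>\<^sub>J\<close> bounds the height of the next coordinate uniformly in terms of the value
  line of \<open>q z\<close> and the coordinates enumerated so far, so each enumeration step takes one of
  finitely many values and is encoded by a code point in \<open>R\<close>. A code point is \<open>f\<close> applied
  to a preimage in \<open>A\<^sup>k\<close>, whose coordinates are partial functions with values in \<open>A\<close>, hence
  in \<open>\<C>\<^sub>I\<close>. An outer partial function reads \<open>q z\<close> off the code points and \<open>z\<close>; it lies in
  \<open>\<C>\<^sub>I\<close> because, inside a set \<open>B\<close> of width \<open>w\<close>, \<open>z\<close> is recovered from the ranks of the code
  points and coordinates on their lines, leaving at most \<open>(w\<^sup>2)\<^sup>m\<close> values per line.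
\<close>

lemma idealI_subset: "Y \<in> idealI \<Longrightarrow> Z \<subseteq> Y \<Longrightarrow> Z \<in> idealI"
proof -
  assume Y: "Y \<in> idealI" and ZY: "Z \<subseteq> Y"
  then obtain w where w: "\<forall>n. finite (Y \<inter> line n) \<and> card (Y \<inter> line n) \<le> w"
    by (auto simp: idealI_def)
  have "finite (Z \<inter> line n) \<and> card (Z \<inter> line n) \<le> w" for n
    using w ZY by (meson Int_mono card_mono finite_subset order_refl le_trans)
  then show "Z \<in> idealI" by (auto simp: idealI_def)
qed

lemma idealI_insert: "Y \<in> idealI \<Longrightarrow> insert p Y \<in> idealI"
proof -
  assume "Y \<in> idealI"
  then obtain w where w: "\<forall>n. finite (Y \<inter> line n) \<and> card (Y \<inter> line n) \<le> w"
    by (auto simp: idealI_def)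
  have "finite (insert p Y \<inter> line n) \<and> card (insert p Y \<inter> line n) \<le> Suc w" for n
  proof -
    have sub: "insert p Y \<inter> line n \<subseteq> insert p (Y \<inter> line n)" by blast
    have "card (insert p (Y \<inter> line n)) \<le> Suc (card (Y \<inter> line n))"
      using w by (simp add: card_insert_if)
    then have "card (insert p (Y \<inter> line n)) \<le> Suc w" using w by (meson Suc_le_mono le_trans)
    then show ?thesis using w sub by (meson card_mono finite_insert finite_subset le_trans)
  qed
  then show "insert p Y \<in> idealI" by (auto simp: idealI_def)
qed

text \<open>A partial function is in \<open>\<C>\<^sub>I\<close> as soon as it maps every \<open>B\<^sup>N\<close> with \<open>B \<in> I\<close>
  into a set of finite width: a total extension is obtained by an arbitrary default value.\<close>

lemma partial_in_cloneI_idealI: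
  assumes "\<And>B. B \<in> idealI \<Longrightarrow> \<exists>Y\<in>idealI. \<forall>u\<in>PiE N (\<lambda>_. B). \<forall>d. p u = Some d \<longrightarrow> d \<in> Y"
  shows "partial_in_clone idealI N p"
proof -
  define g where "g u = (case p u of Some d \<Rightarrow> d | None \<Rightarrow> (0, 0))" for u
  have "in_clone idealI N g"
    unfolding in_clone_def
  proof
    fix B assume "B \<in> idealI"
    then obtain Y where Y: "Y \<in> idealI" "\<forall>u\<in>PiE N (\<lambda>_. B). \<forall>d. p u = Some d \<longrightarrow> d \<in> Y"
      using assms by blast
    have "g ` PiE N (\<lambda>_. B) \<subseteq> insert (0, 0) Y"
      using Y(2) by (auto simp: g_def split: option.splits)
    then show "g ` PiE N (\<lambda>_. B) \<in> idealI"
      using idealI_insert[OF Y(1)] idealI_subset by blast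
  qed
  then show ?thesis unfolding partial_in_clone_def by (force simp: g_def)
qed

lemma not_idealI_points_on_line:
  assumes "R \<notin> idealI"
  shows "\<exists>L T. T \<subseteq> R \<inter> line L \<and> finite T \<and> card T = N"
proof (rule ccontr)
  assume none: "\<not> ?thesis"
  have "finite (R \<inter> line n) \<and> card (R \<inter> line n) \<le> N" for n
  proof
    show fin: "finite (R \<inter> line n)"
      using none infinite_arbitrarily_large[of "R \<inter> line n" N] by blast
    show "card (R \<inter> line n) \<le> N"
    proof (rule ccontr)
      assume "\<not> card (R \<inter> line n) \<le> N"
      then obtain T where "T \<subseteq> R \<inter> line n" "card T = N" "finite T"
        using obtain_subset_with_card_n[of N "R \<inter> line n"] by auto
      then show False using none by blast
    qed
  qed
  then have "R \<in> idealI" unfolding idealI_def by blast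
  then show False using assms by simp
qed

lemma not_idealI_line_encoding:
  assumes "R \<notin> idealI" "finite D"
  shows "\<exists>e. e ` D \<subseteq> R \<and> (\<forall>a\<in>D. \<forall>b\<in>D. snd (e a) = snd (e b)) \<and> inj_on e D"
proof -
  obtain L T where T: "T \<subseteq> R \<inter> line L" "finite T" "card T = card D"
    using not_idealI_points_on_line[OF assms(1)] by blast
  then obtain e where e: "e ` D \<subseteq> T" "inj_on e D"
    using card_le_inj[OF assms(2) T(2)] by (metis order_refl)
  have "snd (e a) = L" if "a \<in> D" for a
    using that e(1) T(1) by (auto simp: line_def)
  then show ?thesis using e T(1) by (intro exI[of _ e]) auto
qed

definition line_rank :: "pt set \<Rightarrow> pt \<Rightarrow> nat" where
  "line_rank B p = card {x\<in>B. snd x = snd p \<and> fst x < fst p}"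

lemma line_rank_strict_mono:
  assumes "finite (B \<inter> line n)" "a \<in> B" "b \<in> B" "snd a = n" "snd b = n" "fst a < fst b"
  shows "line_rank B a < line_rank B b"
proof -
  have "{x\<in>B. snd x = snd a \<and> fst x < fst a} \<subset> {x\<in>B. snd x = snd b \<and> fst x < fst b}"
    using assms(2-6) by auto
  moreover have "finite {x\<in>B. snd x = snd b \<and> fst x < fst b}"
    by (rule finite_subset[OF _ assms(1)]) (auto simp: line_def assms(5))
  ultimately show ?thesis unfolding line_rank_def by (simp add: psubset_card_mono)
qed

lemma line_rank_inj:
  assumes "finite (B \<inter> line n)" "p \<in> B" "p' \<in> B" "snd p = n" "snd p' = n"
    and "line_rank B p = line_rank B p'"
  shows "p = p'"
proof (rule ccontr)
  assume "p \<noteq> p'"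
  then have "fst p < fst p' \<or> fst p' < fst p" using assms(4,5) by (metis prod_eqI linorder_neqE_nat)
  then show False
    using line_rank_strict_mono[OF assms(1)] assms(2-6) by (metis less_irrefl)
qed

lemma line_rank_less:
  assumes "p \<in> B" "finite (B \<inter> line (snd p))" "card (B \<inter> line (snd p)) \<le> w"
  shows "line_rank B p < w"
proof -
  have "{x\<in>B. snd x = snd p \<and> fst x < fst p} \<subset> B \<inter> line (snd p)"
    using assms(1) by (auto simp: line_def)
  then have "line_rank B p < card (B \<inter> line (snd p))"
    unfolding line_rank_def using assms(2) by (simp add: psubset_card_mono)
  then show ?thesis using assms(3) by simp
qed

lemma those_SomeD:
  "those xs = Some ys \<Longrightarrow> length ys = length xs \<and> (\<forall>i<length xs. xs ! i = Some (ys ! i))"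
proof (induction xs arbitrary: ys)
  case (Cons x xs)
  then obtain y zs where "x = Some y" "those xs = Some zs" "ys = y # zs"
    by (auto split: option.splits)
  then show ?case using Cons.IH by (auto simp: nth_Cons split: nat.splits)
qed simp

lemma those_map_Some: "those (map (\<lambda>x. Some (g x)) xs) = Some (map g xs)"
  by (induction xs) auto

definition next_coord :: "nat set \<Rightarrow> (nat \<Rightarrow> pt) \<Rightarrow> nat set \<Rightarrow> nat" where
  "next_coord M z S = (LEAST i. i \<in> M - S \<and> (\<forall>i'\<in>M - S. snd (z i) \<le> snd (z i')))"

primrec first_coords :: "nat set \<Rightarrow> (nat \<Rightarrow> pt) \<Rightarrow> nat \<Rightarrow> nat set" where
  "first_coords M z 0 = {}"
| "first_coords M z (Suc j) = insert (next_coord M z (first_coords M z j)) (first_coords M z j)"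

lemma next_coord_lowest:
  assumes "finite M" "S \<subset> M"
  shows "next_coord M z S \<in> M - S \<and> (\<forall>i\<in>M - S. snd (z (next_coord M z S)) \<le> snd (z i))"
proof -
  have "finite ((\<lambda>i. snd (z i)) ` (M - S))" "(\<lambda>i. snd (z i)) ` (M - S) \<noteq> {}"
    using assms by auto
  then have "Min ((\<lambda>i. snd (z i)) ` (M - S)) \<in> (\<lambda>i. snd (z i)) ` (M - S)" by (rule Min_in)
  then obtain i0 where "i0 \<in> M - S" "snd (z i0) = Min ((\<lambda>i. snd (z i)) ` (M - S))"
    by (metis imageE)
  then have "i0 \<in> M - S \<and> (\<forall>i\<in>M - S. snd (z i0) \<le> snd (z i))"
    using assms(1) by auto
  then show ?thesis unfolding next_coord_def by (rule LeastI)
qed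

lemma first_coords_subset_card:
  assumes "finite M" "j \<le> card M"
  shows "first_coords M z j \<subseteq> M \<and> card (first_coords M z j) = j"
  using assms(2)
proof (induction j)
  case (Suc j)
  then have IH: "first_coords M z j \<subseteq> M" "card (first_coords M z j) = j" by auto
  then have "first_coords M z j \<subset> M" using Suc.prems by auto
  then have "next_coord M z (first_coords M z j) \<in> M - first_coords M z j"
    using next_coord_lowest[OF assms(1)] by blast
  moreover have "finite (first_coords M z j)" using IH assms(1) finite_subset by blast
  ultimately show ?case using IH by auto
qed simp

lemma first_coords_proper: "finite M \<Longrightarrow> j < card M \<Longrightarrow> first_coords M z j \<subset> M"
  using first_coords_subset_card[of M j z] by auto

lemma first_coords_all: "finite M \<Longrightarrow> first_coords M z (card M) = M"
  using first_coords_subset_card[of M "card M" z] by (meson card_subset_eq order_refl)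

lemma hereditarily_thrifty_bound:
  assumes "hereditarily_thrifty M q" "S \<subset> M" "s \<in> PiE S (\<lambda>_. UNIV)"
  shows "\<exists>K. \<forall>z\<in>PiE M (\<lambda>_. UNIV). restrict z S = s \<longrightarrow> q z = Some d \<longrightarrow>
           (\<exists>i\<in>M - S. snd (z i) < K)"
proof -
  have "thrifty (M - S) (restr_fun M S s q)"
    using assms unfolding hereditarily_thrifty_def by blast
  then obtain K where K: "{u \<in> PiE (M - S) (\<lambda>_. UNIV). restr_fun M S s q u = Some d}
                           \<subseteq> Bset (M - S) K"
    unfolding thrifty_def bounded_set_def by blast
  have "\<exists>i\<in>M - S. snd (z i) < K"
    if z: "z \<in> PiE M (\<lambda>_. UNIV)" "restrict z S = s" "q z = Some d" for z
  proof -
    define zt where "zt = restrict z (M - S)"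
    have "(\<lambda>i. if i \<in> S then s i else zt i) = z"
    proof
      fix i show "(if i \<in> S then s i else zt i) = z i"
        using z(2) PiE_arb[OF z(1), of i] assms(2) by (auto simp: zt_def)
    qed
    moreover have zt: "zt \<in> PiE (M - S) (\<lambda>_. UNIV)" by (simp add: zt_def)
    ultimately have "restr_fun M S s q zt = Some d" using z(3) by (simp add: restr_fun_def)
    then have "zt \<in> Bset (M - S) K" using K zt by blast
    then show ?thesis by (auto simp: Bset_def zt_def)
  qed
  then show ?thesis by blast
qed

lemma escaping_sequence_in_idealJ:
  assumes "finite M" "\<And>n i. i \<in> S \<Longrightarrow> zs n i = zs 0 i"
    and "\<And>n i. i \<in> M - S \<Longrightarrow> n \<le> snd (zs n i)"
  shows "(\<Union>n. zs n ` M) \<in> idealJ"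
  unfolding idealJ_def
proof (intro CollectI allI)
  fix l
  have "(\<Union>n. zs n ` M) \<inter> line l \<subseteq> (\<Union>n\<in>{..l}. zs n ` M)"
  proof
    fix x assume "x \<in> (\<Union>n. zs n ` M) \<inter> line l"
    then obtain n i where x: "i \<in> M" "x = zs n i" "snd x = l" by (auto simp: line_def)
    show "x \<in> (\<Union>n\<in>{..l}. zs n ` M)"
    proof (cases "i \<in> S")
      case True
      then have "x = zs 0 i" using x(2) assms(2) by metis
      then show ?thesis using x(1) by blast
    next
      case False
      then show ?thesis using x assms(3)[of i n] by auto
    qed
  qed
  moreover have "finite (\<Union>n\<in>{..l}. zs n ` M)" using assms(1) by simp
  ultimately show "finite ((\<Union>n. zs n ` M) \<inter> line l)" by (rule finite_subset)
qed

lemma partial_in_clone_idealJ_values_on_line: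
  assumes "partial_in_clone idealJ M q" "W \<in> idealJ"
  shows "finite {d \<in> line c. \<exists>z\<in>PiE M (\<lambda>_. W). q z = Some d}"
proof -
  obtain g where g: "in_clone idealJ M g" "\<forall>u\<in>PiE M (\<lambda>_. UNIV). \<forall>d. q u = Some d \<longrightarrow> g u = d"
    using assms(1) unfolding partial_in_clone_def by blast
  have "{d \<in> line c. \<exists>z\<in>PiE M (\<lambda>_. W). q z = Some d} \<subseteq> g ` PiE M (\<lambda>_. W) \<inter> line c"
  proof
    fix d assume "d \<in> {d \<in> line c. \<exists>z\<in>PiE M (\<lambda>_. W). q z = Some d}"
    then obtain z where z: "z \<in> PiE M (\<lambda>_. W)" "q z = Some d" "d \<in> line c" by blast
    have "z \<in> PiE M (\<lambda>_. UNIV)" using z(1) by (auto simp: PiE_iff)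
    then have "g z = d" using g(2) z(2) by blast
    then show "d \<in> g ` PiE M (\<lambda>_. W) \<inter> line c" using z by blast
  qed
  moreover have "finite (g ` PiE M (\<lambda>_. W) \<inter> line c)"
    using g(1) assms(2) unfolding in_clone_def idealJ_def by blast
  ultimately show ?thesis by (rule finite_subset)
qed

text \<open>Otherwise arguments escaping to infinity would form a set in \<open>J\<close>,
  on which \<open>q\<close> takes finitely many values on line \<open>c\<close>; thrift bounds each of them.\<close>

lemma thrifty_line_bound:
  assumes "finite M" "hereditarily_thrifty M q" "partial_in_clone idealJ M q" "S \<subset> M"
  shows "\<exists>K. \<forall>z\<in>PiE M (\<lambda>_. UNIV). restrict z S = s \<longrightarrow> q z \<noteq> None \<longrightarrow>
           snd (the (q z)) = c \<longrightarrow> (\<exists>i\<in>M - S. snd (z i) < K)"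
proof (rule ccontr)
  assume no_bound: "\<not> ?thesis"
  have "\<exists>z. z \<in> PiE M (\<lambda>_. UNIV) \<and> restrict z S = s \<and> q z \<noteq> None \<and>
          snd (the (q z)) = c \<and> (\<forall>i\<in>M - S. n \<le> snd (z i))" for n
  proof -
    obtain z where "z \<in> PiE M (\<lambda>_. UNIV)" "restrict z S = s" "q z \<noteq> None"
        "snd (the (q z)) = c" "\<not> (\<exists>i\<in>M - S. snd (z i) < n)"
      using no_bound by blast
    then show ?thesis by (intro exI[of _ z]) (auto simp: not_less)
  qed
  then obtain zs where "\<forall>n. zs n \<in> PiE M (\<lambda>_. UNIV) \<and> restrict (zs n) S = s \<and>
      q (zs n) \<noteq> None \<and> snd (the (q (zs n))) = c \<and> (\<forall>i\<in>M - S. n \<le> snd (zs n i))"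
    by (metis choice)
  then have zs: "\<And>n. zs n \<in> PiE M (\<lambda>_. UNIV)" "\<And>n. restrict (zs n) S = s"
      "\<And>n. q (zs n) \<noteq> None" "\<And>n. snd (the (q (zs n))) = c"
      "\<And>n i. i \<in> M - S \<Longrightarrow> n \<le> snd (zs n i)"
    by blast+
  have agree: "zs n i = zs 0 i" if "i \<in> S" for n i
    using zs(2)[of n] zs(2)[of 0] that by (metis restrict_apply')
  define W where "W = (\<Union>n. zs n ` M)"
  define F where "F = {d \<in> line c. \<exists>z\<in>PiE M (\<lambda>_. W). q z = Some d}"
  have W: "W \<in> idealJ"
    unfolding W_def using assms(1) agree zs(5) by (rule escaping_sequence_in_idealJ)
  have F: "finite F"
    unfolding F_def using assms(3) W by (rule partial_in_clone_idealJ_values_on_line)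
  have value_in_F: "the (q (zs n)) \<in> F" for n
  proof -
    have "zs n \<in> PiE M (\<lambda>_. W)" using zs(1)[of n] by (auto simp: PiE_iff W_def)
    moreover have "q (zs n) = Some (the (q (zs n)))" using zs(3)[of n] by auto
    ultimately show ?thesis using zs(4)[of n] unfolding F_def line_def by blast
  qed
  have "restrict (zs 0) S \<in> PiE S (\<lambda>_. UNIV)" by simp
  then have "s \<in> PiE S (\<lambda>_. UNIV)" using zs(2)[of 0] by simp
  then have "\<forall>d. \<exists>K. \<forall>z\<in>PiE M (\<lambda>_. UNIV). restrict z S = s \<longrightarrow> q z = Some d \<longrightarrow>
               (\<exists>i\<in>M - S. snd (z i) < K)"
    using hereditarily_thrifty_bound[OF assms(2,4)] by blast
  then obtain K where K: "\<forall>d. \<forall>z\<in>PiE M (\<lambda>_. UNIV). restrict z S = s \<longrightarrow> q z = Some d \<longrightarrow>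
                            (\<exists>i\<in>M - S. snd (z i) < K d)"
    by (metis choice)
  define N where "N = Max (K ` F)"
  have "K (the (q (zs N))) \<le> N" unfolding N_def using F value_in_F by simp
  moreover have "q (zs N) = Some (the (q (zs N)))" using zs(3)[of N] by auto
  then obtain i where "i \<in> M - S" "snd (zs N i) < K (the (q (zs N)))"
    using K zs(1,2) by blast
  ultimately show False using zs(5)[of i N] by simp
qed

text \<open>Data of the coding construction for \<open>q\<close> on \<open>X\<^sup>{1..m}\<close>: \<open>bound c S s\<close> is the uniform
  height bound of \<open>thrifty_line_bound\<close>; \<open>enc c S s\<close> encodes the possible next
  coordinate together with its (bounded) height injectively by points of a single line
  of \<open>R = f[A\<^sup>k]\<close>, where \<open>A \<in> I\<close>; and \<open>dec\<close> chooses preimages under \<open>f\<close> in \<open>A\<^sup>k\<close>.\<close>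

locale coding =
  fixes f :: "(nat \<Rightarrow> pt) \<Rightarrow> pt" and k :: nat and q :: "(nat \<Rightarrow> pt) \<Rightarrow> pt option" and m :: nat
    and A :: "pt set"
    and bound :: "nat \<Rightarrow> nat set \<Rightarrow> (nat \<Rightarrow> pt) \<Rightarrow> nat"
    and enc :: "nat \<Rightarrow> nat set \<Rightarrow> (nat \<Rightarrow> pt) \<Rightarrow> nat \<times> nat \<Rightarrow> pt"
    and dec :: "pt \<Rightarrow> nat \<Rightarrow> pt"
  assumes q_dom: "\<And>u. q u \<noteq> None \<Longrightarrow> u \<in> PiE {1..m} (\<lambda>_. UNIV)"
    and bound: "\<And>S z. S \<subset> {1..m} \<Longrightarrow> z \<in> PiE {1..m} (\<lambda>_. UNIV) \<Longrightarrow> q z \<noteq> None \<Longrightarrow>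
                  \<exists>i\<in>{1..m} - S. snd (z i) < bound (snd (the (q z))) S (restrict z S)"
    and enc_range: "\<And>c S s a. a \<in> ({1..m} - S) \<times> {..<bound c S s} \<Longrightarrow>
                      enc c S s a \<in> f ` PiE {..<k} (\<lambda>_. A)"
    and enc_line: "\<And>c S s a b. a \<in> ({1..m} - S) \<times> {..<bound c S s} \<Longrightarrow>
                      b \<in> ({1..m} - S) \<times> {..<bound c S s} \<Longrightarrow> snd (enc c S s a) = snd (enc c S s b)"
    and enc_inj: "\<And>c S s. inj_on (enc c S s) (({1..m} - S) \<times> {..<bound c S s})"
    and dec: "\<And>t. t \<in> f ` PiE {..<k} (\<lambda>_. A) \<Longrightarrow> dec t \<in> PiE {..<k} (\<lambda>_. A) \<and> f (dec t) = t"
    and A_I: "A \<in> idealI"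
begin

abbreviation coords :: "nat set" where "coords \<equiv> {1..m}"

abbreviation prefix :: "(nat \<Rightarrow> pt) \<Rightarrow> nat \<Rightarrow> nat set" where
  "prefix z j \<equiv> first_coords coords z j"

abbreviation coord_at :: "(nat \<Rightarrow> pt) \<Rightarrow> nat \<Rightarrow> nat" where
  "coord_at z j \<equiv> next_coord coords z (prefix z j)"

definition code_point :: "(nat \<Rightarrow> pt) \<Rightarrow> nat \<Rightarrow> pt" where
  "code_point z j = enc (snd (the (q z))) (prefix z j) (restrict z (prefix z j))
                      (coord_at z j, snd (z (coord_at z j)))"

text \<open>Each enumeration step is a slot of the encoding: the next coordinate lies below the
  uniform bound, because it is the lowest coordinate not yet enumerated.\<close>

lemma code_slot:
  assumes "q z \<noteq> None" "j < m"
  shows "(coord_at z j, snd (z (coord_at z j)))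
           \<in> (coords - prefix z j) \<times> {..<bound (snd (the (q z))) (prefix z j) (restrict z (prefix z j))}"
proof -
  have proper: "prefix z j \<subset> coords" using first_coords_proper assms(2) by simp
  obtain i where i: "i \<in> coords - prefix z j"
      "snd (z i) < bound (snd (the (q z))) (prefix z j) (restrict z (prefix z j))"
    using bound[OF proper q_dom[OF assms(1)] assms(1)] by blast
  have lowest: "coord_at z j \<in> coords - prefix z j \<and> snd (z (coord_at z j)) \<le> snd (z i)"
    using next_coord_lowest[OF _ proper] i(1) by simp
  then show ?thesis using i(2) by auto
qed

lemma code_point_range:
  "q z \<noteq> None \<Longrightarrow> j < m \<Longrightarrow> code_point z j \<in> f ` PiE {..<k} (\<lambda>_. A)"
  unfolding code_point_def using enc_range code_slot by blast

text \<open>The arguments of a node are passed as a tuple indexed from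
  \<open>0\<close>; \<open>arg_block off\<close> reads the \<open>m\<close> arguments at positions \<open>off, \<dots>, off + m - 1\<close> back
  as an element of \<open>X\<^sup>{1..m}\<close>.\<close>

definition arg_block :: "nat \<Rightarrow> (nat \<Rightarrow> pt) \<Rightarrow> nat \<Rightarrow> pt" where
  "arg_block off u = (\<lambda>i. if i \<in> coords then u (off + i - 1) else undefined)"

definition var_terms :: "tm list" where
  "var_terms = map V [1..<Suc m]"

definition preimage_pf :: "nat \<Rightarrow> nat \<Rightarrow> (nat \<Rightarrow> pt) \<Rightarrow> pt option" where
  "preimage_pf j l u = (if q (arg_block 0 u) \<noteq> None
                        then Some (dec (code_point (arg_block 0 u) j) l) else None)"

definition code_term :: "nat \<Rightarrow> tm" where
  "code_term j = Fn (map (\<lambda>l. Pn (preimage_pf j l) var_terms) [0..<k])"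

definition full_code :: "(nat \<Rightarrow> pt) \<Rightarrow> nat \<Rightarrow> pt" where
  "full_code z = (\<lambda>l. if l < m then code_point z l else if l < 2 * m then z (l - m + 1) else undefined)"

definition readout_pf :: "(nat \<Rightarrow> pt) \<Rightarrow> pt option" where
  "readout_pf u = (if q (arg_block m u) \<noteq> None \<and> u = full_code (arg_block m u)
                   then q (arg_block m u) else None)"

definition representing_term :: tm where
  "representing_term = Pn readout_pf (map code_term [0..<m] @ var_terms)"

lemma arg_block_tup:
  assumes "z \<in> PiE coords (\<lambda>_. UNIV)" "off + m \<le> length ys"
    and "\<And>i. i \<in> coords \<Longrightarrow> ys ! (off + i - 1) = z i"
  shows "arg_block off (tup ys) = z"
proof
  fix i show "arg_block off (tup ys) i = z i"
  proof (cases "i \<in> coords")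
    case True
    then have "off + i - 1 < length ys" using assms(2) by auto
    then show ?thesis using True assms(3) by (simp add: arg_block_def tup_def)
  next
    case False
    then show ?thesis
      unfolding arg_block_def if_not_P[OF False] using PiE_arb[OF assms(1) False] by simp
  qed
qed

lemma eval_var_terms: "map (\<lambda>t. eval f t z) var_terms = map (\<lambda>i. Some (z i)) [1..<Suc m]"
  by (simp add: var_terms_def)

lemma eval_preimage:
  assumes "z \<in> PiE coords (\<lambda>_. UNIV)"
  shows "eval f (Pn (preimage_pf j l) var_terms) z =
           (if q z \<noteq> None then Some (dec (code_point z j) l) else None)"
proof -
  have "arg_block 0 (tup (map z [1..<Suc m])) = z"
    by (rule arg_block_tup[OF assms]) (auto simp del: upt_Suc)
  moreover have "eval f (Pn (preimage_pf j l) var_terms) z = preimage_pf j l (tup (map z [1..<Suc m]))"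
    by (simp only: eval.simps eval_var_terms those_map_Some option.case)
  ultimately show ?thesis by (simp add: preimage_pf_def)
qed

lemma eval_code_term:
  assumes "z \<in> PiE coords (\<lambda>_. UNIV)" "q z \<noteq> None" "j < m"
  shows "eval f (code_term j) z = Some (code_point z j)"
proof -
  have pre: "dec (code_point z j) \<in> PiE {..<k} (\<lambda>_. A) \<and> f (dec (code_point z j)) = code_point z j"
    using dec code_point_range[OF assms(2,3)] by blast
  have tup: "tup (map (dec (code_point z j)) [0..<k]) = dec (code_point z j)"
  proof
    fix x show "tup (map (dec (code_point z j)) [0..<k]) x = dec (code_point z j) x"
      using pre PiE_arb[of "dec (code_point z j)" "{..<k}" "\<lambda>_. A" x] by (simp add: tup_def)
  qed
  have "map (\<lambda>t. eval f t z) (map (\<lambda>l. Pn (preimage_pf j l) var_terms) [0..<k])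
          = map (\<lambda>l. Some (dec (code_point z j) l)) [0..<k]"
    using eval_preimage[OF assms(1)] assms(2) by simp
  then have "eval f (code_term j) z = Some (f (tup (map (dec (code_point z j)) [0..<k])))"
    by (simp only: code_term_def eval.simps those_map_Some option.case)
  then show ?thesis using tup pre by simp
qed

lemma eval_outer_args:
  assumes z: "z \<in> PiE coords (\<lambda>_. UNIV)" and defined: "q z \<noteq> None"
  shows "map (\<lambda>t. eval f t z) (map code_term [0..<m] @ var_terms)
           = map (\<lambda>l. Some (full_code z l)) [0..<2 * m]"
proof (rule nth_equalityI)
  fix l assume "l < length (map (\<lambda>t. eval f t z) (map code_term [0..<m] @ var_terms))"
  then have l: "l < 2 * m" by (simp add: var_terms_def del: upt_Suc)
  show "map (\<lambda>t. eval f t z) (map code_term [0..<m] @ var_terms) ! l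
          = map (\<lambda>l. Some (full_code z l)) [0..<2 * m] ! l"
  proof (cases "l < m")
    case True
    then show ?thesis using l eval_code_term[OF z defined] by (simp add: nth_append full_code_def)
  next
    case False
    then have "l - m < m" "Suc 0 + (l - m) = l - m + 1" using l by auto
    then show ?thesis using False l by (simp add: nth_append full_code_def var_terms_def del: upt_Suc)
  qed
qed (simp add: var_terms_def del: upt_Suc)

text \<open>Off the domain of \<open>q\<close> the outer node is undefined
  because it reads back the argument \<open>z\<close> from its last \<open>m\<close> arguments.\<close>

lemma eval_representing_term:
  assumes z: "z \<in> PiE coords (\<lambda>_. UNIV)"
  shows "eval f representing_term z = q z"
proof -
  define xs where "xs = map (\<lambda>t. eval f t z) (map code_term [0..<m] @ var_terms)"
  have block: "arg_block m (tup ys) = z" if those: "those xs = Some ys" for ys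
  proof (rule arg_block_tup[OF z])
    have len: "length ys = m + m"
      using those_SomeD[OF those] by (simp add: xs_def var_terms_def del: upt_Suc)
    then show "m + m \<le> length ys" by simp
    show "ys ! (m + i - 1) = z i" if "i \<in> coords" for i
    proof -
      have "i - 1 < m" "\<not> m + i - 1 < m" "m + i - 1 - m = i - 1" "Suc 0 + (i - 1) = i"
        using that by auto
      then have "xs ! (m + i - 1) = Some (z i)"
        by (simp add: xs_def nth_append var_terms_def del: upt_Suc)
      then show ?thesis using those_SomeD[OF those] len that by auto
    qed
  qed
  have eval_xs: "eval f representing_term z
                   = (case those xs of None \<Rightarrow> None | Some ys \<Rightarrow> readout_pf (tup ys))"
    unfolding representing_term_def xs_def by (simp only: eval.simps)
  show ?thesis
  proof (cases "q z = None")
    case True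
    then show ?thesis using eval_xs block by (auto simp: readout_pf_def split: option.split)
  next
    case False
    then have those: "those xs = Some (map (full_code z) [0..<2 * m])"
      using eval_outer_args[OF z] by (simp add: xs_def those_map_Some)
    have "tup (map (full_code z) [0..<2 * m]) = full_code z"
      by (rule ext) (simp add: tup_def full_code_def)
    then show ?thesis using those block[OF those] False eval_xs by (simp add: readout_pf_def)
  qed
qed

text \<open>The inner nodes take values in \<open>A \<in> I\<close>, so they belong to \<open>\<C>\<^sub>I\<close>.\<close>

lemma preimage_pf_in_CI:
  assumes "j < m" "l < k"
  shows "partial_in_clone idealI {..<m} (preimage_pf j l)"
proof (rule partial_in_cloneI_idealI)
  fix B :: "pt set"
  have "d \<in> A" if "preimage_pf j l u = Some d" for u d
  proof -
    from that have "q (arg_block 0 u) \<noteq> None" "d = dec (code_point (arg_block 0 u) j) l"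
      by (auto simp: preimage_pf_def split: if_splits)
    moreover have "dec (code_point (arg_block 0 u) j) \<in> PiE {..<k} (\<lambda>_. A)"
      using dec code_point_range calculation(1) assms(1) by blast
    ultimately show "d \<in> A" using assms(2) by auto
  qed
  then show "\<exists>Y\<in>idealI. \<forall>u\<in>PiE {..<m} (\<lambda>_. B). \<forall>d. preimage_pf j l u = Some d \<longrightarrow> d \<in> Y"
    using A_I by blast
qed

definition readout_range :: "pt set \<Rightarrow> pt set" where
  "readout_range B = {d. \<exists>z. q z = Some d \<and> (\<forall>j<m. code_point z j \<in> B) \<and> (\<forall>i\<in>coords. z i \<in> B)}"

lemma readout_pf_range:
  assumes u: "u \<in> PiE {..<2 * m} (\<lambda>_. B)" and d: "readout_pf u = Some d"
  shows "d \<in> readout_range B"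
proof -
  define z where "z = arg_block m u"
  have defined: "q z \<noteq> None \<and> u = full_code z"
  proof (rule ccontr)
    assume "\<not> (q z \<noteq> None \<and> u = full_code z)"
    then have "readout_pf u = None" unfolding readout_pf_def z_def[symmetric] by (rule if_not_P)
    then show False using d by simp
  qed
  have "q z = Some d" using d unfolding readout_pf_def z_def[symmetric] if_P[OF defined] .
  moreover have "code_point z j \<in> B" if "j < m" for j
  proof -
    have "code_point z j = u j" using that defined by (simp add: full_code_def)
    then show ?thesis using PiE_mem[OF u, of j] that by simp
  qed
  moreover have "z i \<in> B" if "i \<in> coords" for i
  proof -
    have "m + i - 1 < 2 * m" "\<not> m + i - 1 < m" "m + i - 1 - m + 1 = i" using that by auto
    then have "z i = u (m + i - 1)" using defined by (simp add: full_code_def)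
    then show ?thesis using PiE_mem[OF u, of "m + i - 1"] \<open>m + i - 1 < 2 * m\<close> by simp
  qed
  ultimately show ?thesis unfolding readout_range_def by blast
qed

definition rank_signature :: "pt set \<Rightarrow> (nat \<Rightarrow> pt) \<Rightarrow> (nat \<times> nat) list" where
  "rank_signature B z = map (\<lambda>j. (line_rank B (code_point z j), line_rank B (z (coord_at z j)))) [0..<m]"

text \<open>Equal
  ranks of the code points give equal code points (they lie on one line), hence by
  injectivity of \<open>enc\<close> the same next coordinate at the same height, and equal ranks then
  give the same point there.\<close>

lemma prefix_agreement:
  assumes q: "q z \<noteq> None" "q z' \<noteq> None" "snd (the (q z)) = snd (the (q z'))"
    and in_B: "\<forall>j<m. code_point z j \<in> B" "\<forall>j<m. code_point z' j \<in> B"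
      "\<forall>i\<in>coords. z i \<in> B" "\<forall>i\<in>coords. z' i \<in> B"
    and fin: "\<forall>n. finite (B \<inter> line n)"
    and sig: "rank_signature B z = rank_signature B z'"
  shows "j \<le> m \<Longrightarrow> prefix z j = prefix z' j \<and> (\<forall>i\<in>prefix z j. z i = z' i)"
proof (induction j)
  case (Suc j)
  then have j: "j < m" by simp
  from Suc have IH: "prefix z j = prefix z' j" "\<forall>i\<in>prefix z j. z i = z' i" by auto
  define S where "S = prefix z j"
  define c where "c = snd (the (q z))"
  have s: "restrict z S = restrict z' S" using IH(2) S_def by (auto intro: restrict_ext)
  have ranks: "line_rank B (code_point z j) = line_rank B (code_point z' j)"
      "line_rank B (z (coord_at z j)) = line_rank B (z' (coord_at z' j))"
    using arg_cong[OF sig, of "\<lambda>xs. xs ! j"] j by (simp_all add: rank_signature_def)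
  define a where "a = (coord_at z j, snd (z (coord_at z j)))"
  define a' where "a' = (coord_at z' j, snd (z' (coord_at z' j)))"
  have a: "a \<in> (coords - S) \<times> {..<bound c S (restrict z S)}"
    using code_slot[OF q(1) j] by (simp add: a_def S_def c_def)
  have a': "a' \<in> (coords - S) \<times> {..<bound c S (restrict z S)}"
    using code_slot[OF q(2) j] IH(1) s q(3) by (simp add: a'_def S_def c_def)
  have cp: "code_point z j = enc c S (restrict z S) a"
    by (simp add: code_point_def a_def S_def c_def)
  have cp': "code_point z' j = enc c S (restrict z S) a'"
    using IH(1) s q(3) by (simp add: code_point_def a'_def S_def c_def)
  have "snd (code_point z' j) = snd (code_point z j)" using enc_line[OF a a'] cp cp' by simp
  then have "code_point z j = code_point z' j"
    using line_rank_inj[OF fin[rule_format] _ _ refl _ ranks(1)] in_B(1,2) j by blast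
  then have "a = a'" using enc_inj a a' cp cp' by (metis inj_onD)
  then have same: "coord_at z j = coord_at z' j" "snd (z (coord_at z j)) = snd (z' (coord_at z j))"
    by (auto simp: a_def a'_def)
  have "coord_at z j \<in> coords" using a a_def by auto
  moreover have "line_rank B (z (coord_at z j)) = line_rank B (z' (coord_at z j))"
    using ranks(2) same(1) by simp
  ultimately have "z (coord_at z j) = z' (coord_at z j)"
    using line_rank_inj[OF fin[rule_format] _ _ refl same(2)[symmetric]] in_B(3,4) by blast
  then show ?case using IH same by auto
qed simp

lemma rank_signature_inj:
  assumes "q z \<noteq> None" "q z' \<noteq> None" "snd (the (q z)) = snd (the (q z'))"
    and "\<forall>j<m. code_point z j \<in> B" "\<forall>j<m. code_point z' j \<in> B"
      "\<forall>i\<in>coords. z i \<in> B" "\<forall>i\<in>coords. z' i \<in> B"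
    and "\<forall>n. finite (B \<inter> line n)"
    and "rank_signature B z = rank_signature B z'"
  shows "z = z'"
proof -
  have "prefix z m = prefix z' m \<and> (\<forall>i\<in>prefix z m. z i = z' i)"
    using prefix_agreement[OF assms order_refl] .
  moreover have "prefix z m = coords" using first_coords_all[of coords z] by simp
  ultimately show ?thesis using q_dom assms(1,2) by (metis PiE_ext)
qed

lemma rank_signature_bounded:
  assumes "\<forall>j<m. code_point z j \<in> B" "\<forall>i\<in>coords. z i \<in> B"
    and w: "\<forall>n. finite (B \<inter> line n) \<and> card (B \<inter> line n) \<le> w"
  shows "rank_signature B z \<in> {xs. set xs \<subseteq> {..<w} \<times> {..<w} \<and> length xs = m}"
proof -
  have "line_rank B (code_point z j) < w \<and> line_rank B (z (coord_at z j)) < w" if "j < m" for j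
  proof -
    have "coord_at z j \<in> coords"
      using next_coord_lowest[OF _ first_coords_proper[of coords j]] that by simp
    then show ?thesis using assms(1,2) that line_rank_less w by simp
  qed
  then show ?thesis by (auto simp: rank_signature_def)
qed

text \<open>Counting by rank signatures: on each line there are at most \<open>(w\<^sup>2)\<^sup>m\<close> values of the
  outer node on \<open>B\<^sup>2\<^sup>m\<close>.\<close>

lemma readout_range_line_card:
  assumes w: "\<forall>n. finite (B \<inter> line n) \<and> card (B \<inter> line n) \<le> w"
  shows "finite (readout_range B \<inter> line c) \<and> card (readout_range B \<inter> line c) \<le> (w * w) ^ m"
proof -
  define V where "V = {z. q z \<noteq> None \<and> snd (the (q z)) = c \<and>
                         (\<forall>j<m. code_point z j \<in> B) \<and> (\<forall>i\<in>coords. z i \<in> B)}"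
  define LS where "LS = {xs. set xs \<subseteq> {..<w} \<times> {..<w} \<and> length xs = m}"
  have covered: "readout_range B \<inter> line c \<subseteq> (\<lambda>z. the (q z)) ` V"
  proof
    fix d assume "d \<in> readout_range B \<inter> line c"
    then obtain z where z: "q z = Some d" "\<forall>j<m. code_point z j \<in> B" "\<forall>i\<in>coords. z i \<in> B"
        "snd d = c"
      by (auto simp: readout_range_def line_def)
    then have "z \<in> V" "d = the (q z)" by (simp_all add: V_def)
    then show "d \<in> (\<lambda>z. the (q z)) ` V" by blast
  qed
  have sig_range: "rank_signature B ` V \<subseteq> LS"
    using rank_signature_bounded w unfolding V_def LS_def by blast
  have sig_inj: "inj_on (rank_signature B) V"
    using rank_signature_inj w by (intro inj_onI) (auto simp: V_def)
  have fin_LS: "finite LS" unfolding LS_def by (rule finite_lists_length_eq) simp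
  have "card LS = (w * w) ^ m" unfolding LS_def
    by (subst card_lists_length_eq) (simp_all add: card_cartesian_product)
  then have "finite V" "card V \<le> (w * w) ^ m"
    using inj_on_finite[OF sig_inj sig_range fin_LS] card_inj_on_le[OF sig_inj sig_range fin_LS]
    by simp_all
  then show ?thesis
    using covered by (meson card_image_le card_mono finite_imageI finite_subset le_trans)
qed

lemma readout_range_in_I: "B \<in> idealI \<Longrightarrow> readout_range B \<in> idealI"
  using readout_range_line_card unfolding idealI_def by blast

lemma readout_pf_in_CI: "partial_in_clone idealI {..<2 * m} readout_pf"
  using readout_range_in_I readout_pf_range by (intro partial_in_cloneI_idealI) blast

lemma wf_representing_term: "wf_tm k coords representing_term"
proof -
  have vars: "\<forall>t\<in>set var_terms. wf_tm k coords t" "length var_terms = m"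
    by (auto simp: var_terms_def)
  then have "wf_tm k coords (code_term j)" if "j < m" for j
    using preimage_pf_in_CI[OF that] by (auto simp: code_term_def)
  moreover have "partial_in_clone idealI {..<length (map code_term [0..<m] @ var_terms)} readout_pf"
    using readout_pf_in_CI vars by (simp add: mult_2)
  ultimately show ?thesis using vars by (auto simp: representing_term_def)
qed

theorem represents_q:
  "wf_tm k coords representing_term \<and> (\<forall>z\<in>PiE coords (\<lambda>_. UNIV). eval f representing_term z = q z)"
  using wf_representing_term eval_representing_term by blast

end

text \<open>A witness \<open>A \<in> I\<close> with \<open>f[A\<^sup>k] \<notin> I\<close>
  comes from \<open>f \<notin> \<C>\<^sub>I\<close>; the bounds come from \<open>thrifty_line_bound\<close>; since
  \<open>f[A\<^sup>k]\<close> has infinite width, each finite set of slots injects into one of its lines.\<close>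

lemma coding_data_exists:
  assumes f_not_I: "\<not> in_clone idealI {..<k} f"
    and dom: "\<forall>u. q u \<noteq> None \<longrightarrow> u \<in> PiE {1..m} (\<lambda>_. UNIV)"
    and thrifty: "hereditarily_thrifty {1..m} q"
    and q_J: "partial_in_clone idealJ {1..m} q"
  shows "\<exists>A bound enc dec. coding f k q m A bound enc dec"
proof -
  obtain A where A: "A \<in> idealI" "f ` PiE {..<k} (\<lambda>_. A) \<notin> idealI"
    using f_not_I by (auto simp: in_clone_def)
  define R where "R = f ` PiE {..<k} (\<lambda>_. A)"
  have R: "R \<notin> idealI" using A(2) by (simp add: R_def)
  define bounds where "bounds c S s K \<longleftrightarrow> (\<forall>z\<in>PiE {1..m} (\<lambda>_. UNIV). restrict z S = s \<longrightarrow>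
      q z \<noteq> None \<longrightarrow> snd (the (q z)) = c \<longrightarrow> (\<exists>i\<in>{1..m} - S. snd (z i) < K))" for c S s K
  define bound where "bound c S s = (SOME K. bounds c S s K)" for c S s
  have bound: "bounds c S s (bound c S s)" if "S \<subset> {1..m}" for c S s
    unfolding bound_def bounds_def
    by (rule someI_ex) (rule thrifty_line_bound[OF finite_atLeastAtMost thrifty q_J that])
  define good_enc where "good_enc c S s e \<longleftrightarrow> e ` (({1..m} - S) \<times> {..<bound c S s}) \<subseteq> R \<and>
      (\<forall>a\<in>({1..m} - S) \<times> {..<bound c S s}. \<forall>b\<in>({1..m} - S) \<times> {..<bound c S s}.
        snd (e a) = snd (e b)) \<and> inj_on e (({1..m} - S) \<times> {..<bound c S s})" for c S s e
  have enc_exists: "\<exists>e. good_enc c S s e" for c S s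
    unfolding good_enc_def by (rule not_idealI_line_encoding[OF R]) simp
  define enc where "enc c S s = (SOME e. good_enc c S s e)" for c S s
  have enc: "good_enc c S s (enc c S s)" for c S s
    unfolding enc_def by (rule someI_ex[OF enc_exists])
  define dec where "dec t = (SOME x. x \<in> PiE {..<k} (\<lambda>_. A) \<and> f x = t)" for t
  have dec: "dec t \<in> PiE {..<k} (\<lambda>_. A) \<and> f (dec t) = t" if "t \<in> R" for t
    unfolding dec_def
    by (rule someI_ex[of "\<lambda>x. x \<in> PiE {..<k} (\<lambda>_. A) \<and> f x = t"]) (use that R_def in blast)
  have "coding f k q m A bound enc dec"
  proof
    show "\<exists>i\<in>{1..m} - S. snd (z i) < bound (snd (the (q z))) S (restrict z S)"
      if "S \<subset> {1..m}" "z \<in> PiE {1..m} (\<lambda>_. UNIV)" "q z \<noteq> None" for S z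
      using bound[OF that(1)] that(2,3) unfolding bounds_def by blast
    show "enc c S s a \<in> f ` PiE {..<k} (\<lambda>_. A)"
      if "a \<in> ({1..m} - S) \<times> {..<bound c S s}" for c S s a
      using enc[of c S s] that unfolding good_enc_def R_def by blast
    show "snd (enc c S s a) = snd (enc c S s b)"
      if "a \<in> ({1..m} - S) \<times> {..<bound c S s}" "b \<in> ({1..m} - S) \<times> {..<bound c S s}" for c S s a b
      using enc[of c S s] that unfolding good_enc_def by blast
    show "inj_on (enc c S s) (({1..m} - S) \<times> {..<bound c S s})" for c S s
      using enc[of c S s] unfolding good_enc_def by blast
    show "dec t \<in> PiE {..<k} (\<lambda>_. A) \<and> f (dec t) = t" if "t \<in> f ` PiE {..<k} (\<lambda>_. A)" for t
      using dec that unfolding R_def by blast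
  qed (use dom A(1) in blast)+
  then show ?thesis by blast
qed

text \<open>The main theorem: coding data exist, and the coding construction represents \<open>q\<close>.\<close>

theorem mainTheorem12:
  fixes f :: "(nat \<Rightarrow> pt) \<Rightarrow> pt" and k :: nat
    and q :: "(nat \<Rightarrow> pt) \<Rightarrow> pt option" and m :: nat
  assumes "in_clone idealJ {..<k} f"
    and "\<not> in_clone idealI {..<k} f"
    and "\<forall>u. q u \<noteq> None \<longrightarrow> u \<in> PiE {1..m} (\<lambda>_. UNIV)"
    and "hereditarily_thrifty {1..m} q"
    and "partial_in_clone idealJ {1..m} q"
  shows "\<exists>t. wf_tm k {1..m} t \<and> (\<forall>z\<in>PiE {1..m} (\<lambda>_. UNIV). eval f t z = q z)"
proof -
  obtain A bound enc dec where "coding f k q m A bound enc dec"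
    using coding_data_exists[OF assms(2-5)] by blast
  then interpret coding f k q m A bound enc dec .
  show ?thesis using represents_q by blast
qed

end
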